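(* If $f(z)=z+\sum_{n=2}^\infty a_nz^n\in\mathcal{S}^*_{nc}$, then $$\sum_{n=2}^\infty (n^2k_1-4)|a_n|^2\le 4-k_1,\qquad\text{where } k_1=\cos^2 1.$$
   Context: $\mathbb{D}$ is the open unit disk. $\mathcal{A}$ is the class of analytic $f$ on $\mathbb{D}$ with $f(0)=0$, $f'(0)=1$. For analytic $f,g$ on $\mathbb{D}$, $f\prec g$ means $f=g\circ\omega$ for some analytic $\omega:\mathbb{D}\to\mathbb{D}$ with $\omega(0)=0$. $\mathcal{S}^*_{nc}=\{f\in\mathcal{A}: zf'(z)/f(z)\prec (1+z)/\cos z\}$. *)

theory Defs
  imports "HOL-Analysis.Analysis"
begin

definition unit_disk :: "complex set" where
  "unit_disk = ball 0 1"

definition classA :: "(complex \<Rightarrow> complex) \<Rightarrow> bool" where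
  "classA f \<longleftrightarrow> f holomorphic_on unit_disk \<and> f 0 = 0 \<and> deriv f 0 = 1"

definition subordinate :: "(complex \<Rightarrow> complex) \<Rightarrow> (complex \<Rightarrow> complex) \<Rightarrow> bool" where
  "subordinate f g \<longleftrightarrow>
     (\<exists>w. w holomorphic_on unit_disk \<and> w ` unit_disk \<subseteq> unit_disk \<and> w 0 = 0 \<and>
          (\<forall>z\<in>unit_disk. f z = g (w z)))"

definition starlike_quot :: "(complex \<Rightarrow> complex) \<Rightarrow> complex \<Rightarrow> complex" where
  "starlike_quot f z = (if z = 0 then 1 else z * deriv f z / f z)"

definition S_nc :: "(complex \<Rightarrow> complex) set" where
  "S_nc = {f. classA f \<and> subordinate (starlike_quot f) (\<lambda>z. (1 + z) / cos z)}"

definition taylor_coeff :: "(complex \<Rightarrow> complex) \<Rightarrow> nat \<Rightarrow> complex" where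
  "taylor_coeff f n = (deriv ^^ n) f 0 / of_nat (fact n)"

end

theory Submission
  imports Defs "HOL-Complex_Analysis.Complex_Analysis"
begin

(* Write z f'(z) / f(z) = (1 + w z) / cos (w z) with |w z| < 1.  Since |1 + w| < 2 and
   |cos w| >= cos (Re w) >= cos 1 on the unit disk, cos 1 |z f'(z)| <= 2 |f(z)|.
   Comparing mean squares over the circle |z| = r (Parseval's identity, obtained by sampling
   the truncated Taylor series at the N-th roots of unity and letting N tend to infinity) gives
   sum_n (n^2 cos^2 1 - 4) |a_n|^2 r^(2n) <= 0.  The coefficients n^2 cos^2 1 - 4 are positive
   for n >= 4, so the limit r -> 1 may be taken, and a_0 = 0, a_1 = 1 account for 4 - k1. *)

definition root_of_unity :: "nat \<Rightarrow> complex" where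
  "root_of_unity N = exp (2 * pi * \<i> / of_nat N)"

lemma norm_root_of_unity [simp]: "norm (root_of_unity N) = 1"
  by (simp add: root_of_unity_def norm_exp_eq_Re)

lemma sum_root_of_unity_orthogonal:
  fixes n m N :: nat
  defines "\<omega> \<equiv> root_of_unity N"
  assumes "n < N" "m < N"
  shows "(\<Sum>k<N. \<omega> ^ (k * n) * cnj (\<omega> ^ (k * m))) = (if n = m then of_nat N else 0)"
proof -
  define q where "q = exp (2 * pi * \<i> * of_int (int n - int m) / of_nat N)"
  have N_pos: "0 < N" using assms by simp
  have power_q: "\<omega> ^ (k * n) * cnj (\<omega> ^ (k * m)) = q ^ k" for k
  proof -
    have "\<omega> ^ (k * n) * cnj (\<omega> ^ (k * m))
        = exp (of_nat (k * n) * (2 * pi * \<i> / N)) * exp (of_nat (k * m) * (- 2 * pi * \<i> / N))"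
      by (simp add: \<omega>_def root_of_unity_def exp_of_nat_mult[symmetric] exp_cnj)
    also have "\<dots> = exp (of_nat k * (2 * pi * \<i> * of_int (int n - int m) / N))"
      by (simp add: exp_add[symmetric] algebra_simps diff_divide_distrib)
    finally show ?thesis by (simp add: q_def exp_of_nat_mult[symmetric])
  qed
  show ?thesis
  proof (cases "n = m")
    case True
    then show ?thesis unfolding power_q by (simp add: q_def)
  next
    case False
    have "q ^ N = exp (2 * pi * \<i> * of_int (int n - int m))"
      using N_pos by (simp add: q_def exp_of_nat_mult[symmetric])
    also have "\<dots> = 1" by (simp add: exp_eq_1) (metis of_int_of_nat_eq of_int_diff)
    finally have "q ^ N = 1" .
    moreover have "q \<noteq> 1"
    proof
      assume "q = 1"
      then obtain j :: int where "2 * pi * of_int (int n - int m) / N = of_int (2 * j) * pi"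
        by (auto simp: q_def exp_eq_1)
      then have "pi * (real_of_int (int n - int m) - of_int j * N) = 0"
        using N_pos by (simp add: field_simps)
      then have "real_of_int (int n - int m) = real_of_int (j * int N)" by simp
      then have "int n - int m = j * int N" by (simp only: of_int_eq_iff)
      moreover have "\<bar>int n - int m\<bar> < int N" using assms by auto
      ultimately have "j = 0" using N_pos by (simp add: abs_mult)
      with \<open>int n - int m = j * int N\<close> False show False by simp
    qed
    ultimately show ?thesis using False unfolding power_q by (simp add: sum_gp_strict)
  qed
qed

lemma discrete_parseval:
  fixes c :: "nat \<Rightarrow> complex"
  shows "(\<Sum>k<N. (norm (\<Sum>n<N. c n * root_of_unity N ^ (k * n)))\<^sup>2)
       = real N * (\<Sum>n<N. (norm (c n))\<^sup>2)"
proof -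
  let ?\<omega> = "root_of_unity N"
  have "complex_of_real (\<Sum>k<N. (norm (\<Sum>n<N. c n * ?\<omega> ^ (k * n)))\<^sup>2)
      = (\<Sum>k<N. \<Sum>n<N. \<Sum>m<N. c n * cnj (c m) * (?\<omega> ^ (k * n) * cnj (?\<omega> ^ (k * m))))"
    unfolding of_real_sum complex_norm_square cnj_sum sum_product by (simp add: mult_ac)
  also have "\<dots> = (\<Sum>n<N. \<Sum>m<N. c n * cnj (c m) * (\<Sum>k<N. ?\<omega> ^ (k * n) * cnj (?\<omega> ^ (k * m))))"
    by (subst sum.swap, rule sum.cong[OF refl], subst sum.swap) (simp add: sum_distrib_left)
  also have "\<dots> = (\<Sum>n<N. \<Sum>m<N. c n * cnj (c m) * (if n = m then of_nat N else 0))"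
    by (intro sum.cong refl) (simp only: lessThan_iff sum_root_of_unity_orthogonal)
  also have "\<dots> = complex_of_real (real N * (\<Sum>n<N. (norm (c n))\<^sup>2))"
    by (simp add: if_distrib sum_distrib_left complex_norm_square[symmetric] mult_ac cong: if_cong)
  finally show ?thesis by (simp only: of_real_eq_iff)
qed

lemma L2_set_coeffs_le_of_samples_le:
  fixes c d :: "nat \<Rightarrow> complex"
  assumes "0 \<le> T"
    and samples_le: "\<And>k. k < N \<Longrightarrow>
      norm (\<Sum>n<N. c n * root_of_unity N ^ (k * n))
        \<le> norm (\<Sum>n<N. d n * root_of_unity N ^ (k * n)) + T"
  shows "L2_set (\<lambda>n. norm (c n)) {..<N} \<le> L2_set (\<lambda>n. norm (d n)) {..<N} + T"
proof (cases "N = 0")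
  case True
  then show ?thesis using \<open>0 \<le> T\<close> by simp
next
  case False
  have sampled: "L2_set (\<lambda>k. norm (\<Sum>n<N. e n * root_of_unity N ^ (k * n))) {..<N}
      = sqrt (real N) * L2_set (\<lambda>n. norm (e n)) {..<N}" for e
    by (simp add: L2_set_def discrete_parseval real_sqrt_mult)
  have "sqrt (real N) * L2_set (\<lambda>n. norm (c n)) {..<N}
      \<le> L2_set (\<lambda>k. norm (\<Sum>n<N. d n * root_of_unity N ^ (k * n)) + T) {..<N}"
    unfolding sampled[symmetric] by (rule L2_set_mono) (simp_all add: samples_le)
  also have "\<dots> \<le> sqrt (real N) * L2_set (\<lambda>n. norm (d n)) {..<N} + sqrt (real N) * T"
    using L2_set_triangle_ineq[of "\<lambda>k. norm (\<Sum>n<N. d n * root_of_unity N ^ (k * n))"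
        "\<lambda>_. T" "{..<N}"] \<open>0 \<le> T\<close> by (simp add: sampled L2_set_constant)
  finally show ?thesis using False by (simp add: distrib_left[symmetric])
qed

definition powser_norm_tail :: "(nat \<Rightarrow> 'a::real_normed_vector) \<Rightarrow> real \<Rightarrow> nat \<Rightarrow> real" where
  "powser_norm_tail c r N = (\<Sum>n. norm (c n) * r ^ n) - (\<Sum>n<N. norm (c n) * r ^ n)"

lemma powser_norm_tail_nonneg:
  assumes "summable (\<lambda>n. norm (c n) * r ^ n)" "0 \<le> r"
  shows "0 \<le> powser_norm_tail c r N"
  using sum_le_suminf[OF assms(1), of "{..<N}"] assms(2) by (simp add: powser_norm_tail_def)

lemma powser_norm_tail_tendsto_0:
  assumes "summable (\<lambda>n. norm (c n) * r ^ n)"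
  shows "powser_norm_tail c r \<longlonglongrightarrow> 0"
  using tendsto_diff[OF tendsto_const summable_LIMSEQ[OF assms], of "\<Sum>n. norm (c n) * r ^ n"]
  by (simp add: powser_norm_tail_def[abs_def])

lemma norm_powser_tail_le:
  fixes c :: "nat \<Rightarrow> 'a::{real_normed_div_algebra, banach}"
  assumes "summable (\<lambda>n. norm (c n) * norm z ^ n)"
  shows "norm ((\<Sum>n. c n * z ^ n) - (\<Sum>n<N. c n * z ^ n)) \<le> powser_norm_tail c (norm z) N"
proof -
  have norms: "summable (\<lambda>n. norm (c n * z ^ n))"
    using assms by (simp add: norm_mult norm_power)
  have "(\<Sum>n. c n * z ^ n) - (\<Sum>n<N. c n * z ^ n) = (\<Sum>n. c (n + N) * z ^ (n + N))"
    using suminf_minus_initial_segment[OF summable_norm_cancel[OF norms]] by simp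
  also have "norm \<dots> \<le> (\<Sum>n. norm (c (n + N) * z ^ (n + N)))"
    by (rule summable_norm) (use norms summable_iff_shift[of "\<lambda>n. norm (c n * z ^ n)"] in simp)
  also have "\<dots> = powser_norm_tail c (norm z) N"
    using suminf_minus_initial_segment[OF assms]
    by (simp add: powser_norm_tail_def norm_mult norm_power)
  finally show ?thesis .
qed

lemma summable_power2_of_summable_nonneg:
  fixes x :: "nat \<Rightarrow> real"
  assumes "summable x" "\<And>n. 0 \<le> x n"
  shows "summable (\<lambda>n. (x n)\<^sup>2)"
proof (rule summable_comparison_test_ev[OF _ assms(1)])
  have "eventually (\<lambda>n. x n < 1) sequentially"
    using summable_LIMSEQ_zero[OF assms(1)] by (rule order_tendstoD) simp
  then show "eventually (\<lambda>n. norm ((x n)\<^sup>2) \<le> x n) sequentially"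
    by eventually_elim (use assms(2) in \<open>simp add: power2_eq_square mult_left_le\<close>)
qed

lemma powser_truncated_L2_le:
  fixes c d :: "nat \<Rightarrow> complex" and r :: real
  assumes "0 \<le> r"
    and summable_c: "summable (\<lambda>n. norm (c n) * r ^ n)"
    and summable_d: "summable (\<lambda>n. norm (d n) * r ^ n)"
    and on_circle: "\<And>z. norm z = r \<Longrightarrow> norm (\<Sum>n. c n * z ^ n) \<le> norm (\<Sum>n. d n * z ^ n)"
  shows "L2_set (\<lambda>n. norm (c n) * r ^ n) {..<N}
      \<le> L2_set (\<lambda>n. norm (d n) * r ^ n) {..<N} + (powser_norm_tail c r N + powser_norm_tail d r N)"
proof -
  let ?T = "powser_norm_tail c r N + powser_norm_tail d r N"
  have "L2_set (\<lambda>n. norm (c n * of_real r ^ n)) {..<N}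
      \<le> L2_set (\<lambda>n. norm (d n * of_real r ^ n)) {..<N} + ?T"
  proof (rule L2_set_coeffs_le_of_samples_le)
    show "0 \<le> ?T"
      using powser_norm_tail_nonneg[OF summable_c] powser_norm_tail_nonneg[OF summable_d] \<open>0 \<le> r\<close>
      by simp
    fix k
    define z where "z = of_real r * root_of_unity N ^ k"
    have "norm z = r" using \<open>0 \<le> r\<close> by (simp add: z_def norm_mult norm_power)
    have samples: "(\<Sum>n<N. e n * z ^ n) = (\<Sum>n<N. e n * of_real r ^ n * root_of_unity N ^ (k * n))"
      for e :: "nat \<Rightarrow> complex"
      by (simp add: z_def power_mult_distrib power_mult mult.assoc mult.left_commute)
    note tail_c = norm_powser_tail_le[of c z N, unfolded \<open>norm z = r\<close>, OF summable_c]
    note tail_d = norm_powser_tail_le[of d z N, unfolded \<open>norm z = r\<close>, OF summable_d]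
    have "norm (\<Sum>n<N. c n * z ^ n) \<le> norm (\<Sum>n. c n * z ^ n) + powser_norm_tail c r N"
      using norm_triangle_ineq4[of "\<Sum>n. c n * z ^ n" "(\<Sum>n. c n * z ^ n) - (\<Sum>n<N. c n * z ^ n)"]
        tail_c by simp
    also have "\<dots> \<le> norm (\<Sum>n. d n * z ^ n) + powser_norm_tail c r N"
      using on_circle[OF \<open>norm z = r\<close>] by simp
    also have "\<dots> \<le> norm (\<Sum>n<N. d n * z ^ n) + ?T"
      using norm_triangle_ineq[of "\<Sum>n<N. d n * z ^ n" "(\<Sum>n. d n * z ^ n) - (\<Sum>n<N. d n * z ^ n)"]
        tail_d by simp
    finally show "norm (\<Sum>n<N. c n * of_real r ^ n * root_of_unity N ^ (k * n))
        \<le> norm (\<Sum>n<N. d n * of_real r ^ n * root_of_unity N ^ (k * n)) + ?T"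
      by (simp only: samples)
  qed
  then show ?thesis using \<open>0 \<le> r\<close> by (simp add: norm_mult norm_power)
qed

lemma powser_coeff_L2_le:
  fixes c d :: "nat \<Rightarrow> complex" and r :: real
  assumes "0 \<le> r"
    and summable_c: "summable (\<lambda>n. norm (c n) * r ^ n)"
    and summable_d: "summable (\<lambda>n. norm (d n) * r ^ n)"
    and on_circle: "\<And>z. norm z = r \<Longrightarrow> norm (\<Sum>n. c n * z ^ n) \<le> norm (\<Sum>n. d n * z ^ n)"
  shows "summable (\<lambda>n. (norm (c n) * r ^ n)\<^sup>2)" (is "summable ?C")
    and "summable (\<lambda>n. (norm (d n) * r ^ n)\<^sup>2)" (is "summable ?D")
    and "(\<Sum>n. (norm (c n) * r ^ n)\<^sup>2) \<le> (\<Sum>n. (norm (d n) * r ^ n)\<^sup>2)"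
proof -
  show C: "summable ?C" and D: "summable ?D"
    using summable_c summable_d \<open>0 \<le> r\<close> by (auto intro!: summable_power2_of_summable_nonneg)
  let ?T = "\<lambda>N. powser_norm_tail c r N + powser_norm_tail d r N"
  have "sqrt (\<Sum>n. ?C n) \<le> sqrt (\<Sum>n. ?D n) + (0 + 0)"
  proof (rule tendsto_le[OF trivial_limit_sequentially])
    show "(\<lambda>N. sqrt (\<Sum>n<N. ?D n) + ?T N) \<longlonglongrightarrow> sqrt (\<Sum>n. ?D n) + (0 + 0)"
      by (intro tendsto_intros summable_LIMSEQ D powser_norm_tail_tendsto_0 summable_c summable_d)
    show "(\<lambda>N. sqrt (\<Sum>n<N. ?C n)) \<longlonglongrightarrow> sqrt (\<Sum>n. ?C n)"
      by (intro tendsto_intros summable_LIMSEQ C)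
    show "\<forall>\<^sub>F N in sequentially. sqrt (\<Sum>n<N. ?C n) \<le> sqrt (\<Sum>n<N. ?D n) + ?T N"
      using powser_truncated_L2_le[OF assms] by (simp add: L2_set_def)
  qed
  then show "(\<Sum>n. ?C n) \<le> (\<Sum>n. ?D n)" by simp
qed

lemma powser_bounded_imp_summable:
  fixes b :: "nat \<Rightarrow> real"
  assumes nonneg: "\<And>n. K \<le> n \<Longrightarrow> 0 \<le> b n"
    and summable: "\<And>s. 0 < s \<Longrightarrow> s < 1 \<Longrightarrow> summable (\<lambda>n. b n * s ^ n)"
    and bounded: "\<And>s. 0 < s \<Longrightarrow> s < 1 \<Longrightarrow> (\<Sum>n. b n * s ^ n) \<le> B"
  shows "summable b" and "suminf b \<le> B"
proof -
  have partial_sums: "(\<Sum>n<N. b n) \<le> B" if "K \<le> N" for N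
  proof (rule tendsto_le[OF trivial_limit_at_left_real])
    show "((\<lambda>s. \<Sum>n<N. b n * s ^ n) \<longlongrightarrow> (\<Sum>n<N. b n)) (at_left 1)"
      by (rule tendsto_eq_intros refl)+ simp
    have "(\<Sum>n<N. b n * s ^ n) \<le> B" if "0 < s" "s < 1" for s
    proof -
      have "(\<Sum>n<N. b n * s ^ n) \<le> (\<Sum>n. b n * s ^ n)"
        by (rule sum_le_suminf[OF summable[OF that]]) (use nonneg \<open>K \<le> N\<close> \<open>0 < s\<close> in auto)
      then show ?thesis using bounded[OF that] by linarith
    qed
    then show "\<forall>\<^sub>F s in at_left 1. (\<Sum>n<N. b n * s ^ n) \<le> B"
      using eventually_at_left_real[of 0 "1::real"] by (auto elim: eventually_mono)
  qed simp
  have "summable (\<lambda>n. b (n + K))"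
  proof (rule bounded_imp_summable)
    show "0 \<le> b (n + K)" for n by (rule nonneg) simp
    show "(\<Sum>n\<le>N. b (n + K)) \<le> B - (\<Sum>n<K. b n)" for N
    proof -
      have "(\<Sum>n\<le>N. b (n + K)) = (\<Sum>n\<in>{K..<Suc N + K}. b n)"
        using sum.shift_bounds_nat_ivl[of b 0 K "Suc N"]
        by (simp add: atLeast0LessThan lessThan_Suc_atMost)
      also have "\<dots> = (\<Sum>n<Suc N + K. b n) - (\<Sum>n<K. b n)"
        using sum.atLeastLessThan_concat[of 0 K "Suc N + K" b] by (simp add: atLeast0LessThan)
      finally show ?thesis using partial_sums[of "Suc N + K"] by simp
    qed
  qed
  then show "summable b" by (simp add: summable_iff_shift)
  then show "suminf b \<le> B"
    using partial_sums by (intro LIMSEQ_le_const2[OF summable_LIMSEQ]) auto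
qed

lemma taylor_coeff_sums:
  assumes "f holomorphic_on ball 0 R" "norm z < R"
  shows "(\<lambda>n. taylor_coeff f n * z ^ n) sums f z"
  using holomorphic_power_series[OF assms(1), of z] assms(2) by (simp add: taylor_coeff_def)

lemma taylor_coeff_deriv_sums:
  assumes holf: "f holomorphic_on ball 0 R" and "norm z < R"
  shows "(\<lambda>n. of_nat n * taylor_coeff f n * z ^ n) sums (z * deriv f z)"
proof -
  have coeff: "(deriv ^^ n) (deriv f) 0 / fact n = of_nat (Suc n) * taylor_coeff f (Suc n)" for n
  proof -
    have "(of_nat (Suc n) :: complex) \<noteq> 0" by (rule of_nat_neq_0)
    then have "of_nat (Suc n) * taylor_coeff f (Suc n) = (deriv ^^ Suc n) f 0 / fact n"
      unfolding taylor_coeff_def fact_Suc of_nat_mult of_nat_fact of_nat_id times_divide_eq_right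
      by (rule mult_divide_mult_cancel_left)
    then show ?thesis by (simp only: funpow_Suc_right o_apply)
  qed
  have "deriv f holomorphic_on ball 0 R" by (rule holomorphic_deriv[OF holf]) simp
  from holomorphic_power_series[OF this, of z]
  have "(\<lambda>n. of_nat (Suc n) * taylor_coeff f (Suc n) * z ^ n) sums deriv f z"
    using \<open>norm z < R\<close> by (simp only: coeff) simp
  then have "(\<lambda>n. z * (of_nat (Suc n) * taylor_coeff f (Suc n) * z ^ n)) sums (z * deriv f z)"
    by (rule sums_mult)
  then have "(\<lambda>n. of_nat (Suc n) * taylor_coeff f (Suc n) * z ^ Suc n) sums (z * deriv f z)"
    by (simp only: power_Suc mult_ac)
  then have "(\<lambda>n. of_nat n * taylor_coeff f n * z ^ n) sums (z * deriv f z + 0)"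
    using sums_Suc_iff[where f = "\<lambda>n. of_nat n * taylor_coeff f n * z ^ n"] by simp
  then show ?thesis by simp
qed

lemma summable_norm_powser_inside:
  fixes c :: "nat \<Rightarrow> complex"
  assumes "\<And>z. norm z < R \<Longrightarrow> summable (\<lambda>n. c n * z ^ n)" "0 \<le> r" "r < R"
  shows "summable (\<lambda>n. norm (c n) * r ^ n)"
proof -
  define x where "x = (r + R) / 2"
  have "r < x" "x < R" using assms by (simp_all add: x_def)
  then have "r < norm (of_real x :: complex)" "norm (of_real x :: complex) < R"
    using \<open>0 \<le> r\<close> by simp_all
  then have "summable (\<lambda>n. norm (c n * of_real r ^ n))"
    using powser_insidea[OF assms(1)[of "of_real x"]] \<open>0 \<le> r\<close> by simp
  then show ?thesis using \<open>0 \<le> r\<close> by (simp add: norm_mult norm_power)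
qed

lemma cos_one_gt_half: "cos (1::real) > 1/2"
proof -
  have "cos (1::real) > cos (pi/3)"
    using pi_gt3 by (intro cos_monotone_0_pi) auto
  then show ?thesis by (simp add: cos_60)
qed

lemma cos_one_le_norm_cos:
  fixes w :: complex
  assumes "norm w \<le> 1"
  shows "cos 1 \<le> norm (cos w)"
proof -
  have "cos 1 \<le> cos \<bar>Re w\<bar>"
    using abs_Re_le_cmod[of w] assms pi_gt3 by (intro cos_monotone_0_pi_le) auto
  also have "\<dots> = cos (Re w)" by simp
  also have "\<dots> \<le> norm (cos w)"
  proof (rule power2_le_imp_le)
    show "(cos (Re w))\<^sup>2 \<le> (norm (cos w))\<^sup>2"
      unfolding norm_cos_squared by simp
  qed simp
  finally show ?thesis .
qed

lemma S_nc_norm_deriv_le: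
  assumes "f \<in> S_nc" and z: "z \<in> unit_disk"
  shows "cos 1 * norm (z * deriv f z) \<le> 2 * norm (f z)"
proof (cases "z = 0")
  case True
  then show ?thesis by simp
next
  case False
  from assms obtain w where w: "w ` unit_disk \<subseteq> unit_disk"
    and quot: "starlike_quot f z = (1 + w z) / cos (w z)"
    by (auto simp: S_nc_def subordinate_def)
  have "w z \<in> unit_disk" using w z by blast
  then have "norm (w z) < 1" by (simp add: unit_disk_def)
  then have cos_ge: "cos 1 \<le> norm (cos (w z))" by (intro cos_one_le_norm_cos) simp
  then have "cos (w z) \<noteq> 0" using cos_one_gt_half by auto
  have "1 + w z \<noteq> 0"
  proof
    assume "1 + w z = 0"
    then have "w z = -1" by (simp add: add_eq_0_iff)
    with \<open>norm (w z) < 1\<close> show False by simp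
  qed
  have "z * deriv f z / f z = (1 + w z) / cos (w z)"
    using quot False by (simp add: starlike_quot_def)
  moreover have "f z \<noteq> 0"
    using calculation \<open>1 + w z \<noteq> 0\<close> \<open>cos (w z) \<noteq> 0\<close> by auto
  ultimately have "norm (z * deriv f z) * norm (cos (w z)) = norm (f z) * norm (1 + w z)"
    using \<open>cos (w z) \<noteq> 0\<close> by (simp add: field_simps flip: norm_mult)
  also have "\<dots> \<le> norm (f z) * 2"
    using norm_triangle_ineq[of 1 "w z"] \<open>norm (w z) < 1\<close> by (intro mult_left_mono) simp_all
  finally show ?thesis
    using mult_left_mono[OF cos_ge norm_ge_zero[of "z * deriv f z"]] by (simp add: mult.commute)
qed

lemma S_nc_coeff_powser_nonpos:
  fixes f :: "complex \<Rightarrow> complex"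
  assumes f: "f \<in> S_nc" and "0 < s" "s < 1"
  shows "summable (\<lambda>n. (real (n\<^sup>2) * (cos 1)\<^sup>2 - 4) * (norm (taylor_coeff f n))\<^sup>2 * s ^ n)"
    and "(\<Sum>n. (real (n\<^sup>2) * (cos 1)\<^sup>2 - 4) * (norm (taylor_coeff f n))\<^sup>2 * s ^ n) \<le> 0"
proof -
  define r where "r = sqrt s"
  have "0 \<le> r" "r < 1" using assms by (simp_all add: r_def)
  have hol: "f holomorphic_on ball 0 1"
    using f by (simp add: S_nc_def classA_def unit_disk_def)
  define c where "c n = of_real (cos 1) * (of_nat n * taylor_coeff f n)" for n
  define d where "d n = 2 * taylor_coeff f n" for n
  have c_sums: "(\<lambda>n. c n * z ^ n) sums (of_real (cos 1) * (z * deriv f z))" if "norm z < 1" for z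
    using sums_mult[OF taylor_coeff_deriv_sums[OF hol that]] by (simp add: c_def mult.assoc)
  have d_sums: "(\<lambda>n. d n * z ^ n) sums (2 * f z)" if "norm z < 1" for z
    using sums_mult[OF taylor_coeff_sums[OF hol that]] by (simp add: d_def mult.assoc)
  have summable_c: "summable (\<lambda>n. norm (c n) * r ^ n)"
    using c_sums sums_summable \<open>0 \<le> r\<close> \<open>r < 1\<close> by (blast intro: summable_norm_powser_inside)
  have summable_d: "summable (\<lambda>n. norm (d n) * r ^ n)"
    using d_sums sums_summable \<open>0 \<le> r\<close> \<open>r < 1\<close> by (blast intro: summable_norm_powser_inside)
  have on_circle: "norm (\<Sum>n. c n * z ^ n) \<le> norm (\<Sum>n. d n * z ^ n)" if "norm z = r" for z
  proof -
    have "norm z < 1" using that \<open>r < 1\<close> by simp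
    then have "z \<in> unit_disk" by (simp add: unit_disk_def)
    then show ?thesis
      using S_nc_norm_deriv_le[OF f] cos_one_gt_half
      by (simp add: sums_unique[OF c_sums[OF \<open>norm z < 1\<close>], symmetric]
          sums_unique[OF d_sums[OF \<open>norm z < 1\<close>], symmetric] norm_mult)
  qed
  note L2 = powser_coeff_L2_le[OF \<open>0 \<le> r\<close> summable_c summable_d on_circle]
  have terms: "(norm (c n) * r ^ n)\<^sup>2 - (norm (d n) * r ^ n)\<^sup>2
      = (real (n\<^sup>2) * (cos 1)\<^sup>2 - 4) * (norm (taylor_coeff f n))\<^sup>2 * s ^ n" for n
  proof -
    have "r\<^sup>2 = s" using \<open>0 < s\<close> by (simp add: r_def)
    then have "(r ^ n)\<^sup>2 = s ^ n" by (metis power_mult mult.commute)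
    then show ?thesis using cos_one_gt_half
      by (simp add: c_def d_def norm_mult algebra_simps)
  qed
  show "summable (\<lambda>n. (real (n\<^sup>2) * (cos 1)\<^sup>2 - 4) * (norm (taylor_coeff f n))\<^sup>2 * s ^ n)"
    using summable_diff[OF L2(1,2)] by (simp add: terms)
  show "(\<Sum>n. (real (n\<^sup>2) * (cos 1)\<^sup>2 - 4) * (norm (taylor_coeff f n))\<^sup>2 * s ^ n) \<le> 0"
    using suminf_diff[OF L2(1,2)] L2(3) by (simp add: terms)
qed

theorem mainTheorem3:
  fixes f :: "complex \<Rightarrow> complex"
  assumes "f \<in> S_nc"
  defines "k1 \<equiv> (cos (1::real))\<^sup>2"
  shows "summable (\<lambda>m. (real ((m+2)^2) * k1 - 4) * (norm (taylor_coeff f (m+2)))\<^sup>2)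
         \<and> (\<Sum>m. (real ((m+2)^2) * k1 - 4) * (norm (taylor_coeff f (m+2)))\<^sup>2) \<le> 4 - k1"
proof -
  define b where "b n = (real (n\<^sup>2) * k1 - 4) * (norm (taylor_coeff f n))\<^sup>2" for n
  have "1/4 < k1"
    using cos_one_gt_half power_strict_mono[of "1/2::real" "cos 1" 2] by (simp add: k1_def power_divide)
  then have b_nonneg: "0 \<le> b n" if "4 \<le> n" for n
  proof -
    have "16 \<le> real (n\<^sup>2)" using power_mono[OF that, of 2] by (simp flip: of_nat_power)
    then have "16 * (1/4) \<le> real (n\<^sup>2) * k1"
      using \<open>1/4 < k1\<close> by (intro mult_mono) simp_all
    then show ?thesis by (simp add: b_def)
  qed
  have "summable b" "suminf b \<le> 0"
    using powser_bounded_imp_summable[of 4 b 0, OF b_nonneg]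
      S_nc_coeff_powser_nonpos[OF \<open>f \<in> S_nc\<close>] by (simp_all add: b_def k1_def)
  moreover have "b 0 = 0" "b 1 = k1 - 4"
    using \<open>f \<in> S_nc\<close> by (simp_all add: b_def taylor_coeff_def S_nc_def classA_def)
  ultimately have "summable (\<lambda>m. b (m + 2))" "(\<Sum>m. b (m + 2)) \<le> 4 - k1"
    using summable_iff_shift[of b 2] suminf_minus_initial_segment[of b 2]
    by (simp_all add: numeral_2_eq_2)
  then show ?thesis by (simp add: b_def)
qed

end
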